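(* Let $\mathbb{F}_2$ be the free group on $T_1,T_2$, let $X=\{-1,1\}^{\mathbb{F}_2}$ with the product of the uniform measures on $\{-1,1\}$, and let $\mathbb{F}_2$ act by the shift $(gx)^h=x^{hg}$. For $x\in X$ define its two potential targets $t(x)=\{T_1x,T_2x\}$ if $x^e=1$ and $t(x)=\{T_1^{-1}x,T_2^{-1}x\}$ if $x^e=-1$. Colour $X$ with the four colours $(i,p)$, $i\in\{1,2\}$ (active part), $p\in\{u,c\}$ (passive part). For a colouring, the arrow of $x$ points to $T_i^{x^e}x$, where $i$ is the active part of the colour of $x$. The colouring rule requires at each $x$: (1) if one point of $t(x)$ has passive colour $c$ and the other has passive colour $u$, then the arrow of $x$ points to the one with passive colour $u$ (otherwise either direction is allowed); (2) the passive colour of $x$ is $c$ if the arrows of at least two points point to $x$, and is $u$ otherwise. Then this colouring rule is paradoxical.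
   Context: Here $e$ is the identity of $\mathbb{F}_2$ and $x^e$ the $e$-coordinate of $x$. A colouring satisfies the rule if it holds at almost every $x$. The rule is paradoxical if (a) some colouring (not necessarily measurable) satisfies it, and (b) there is no pair $(\mu,c)$ where $\mu$ is a finitely additive $\mathbb{F}_2$-invariant probability measure on an $\mathbb{F}_2$-invariant algebra $\mathcal{B}$ containing all measurable sets of the (completed) product measure and extending it, and $c$ is a colouring satisfying the rule all of whose colour classes lie in $\mathcal{B}$. *)

theory Defs
  imports "HOL-Probability.Probability"
begin

datatype gen = T1 | T2

(* a letter (a, True) is the generator a, (a, False) its inverse *)
type_synonym letter = "gen \<times> bool"

definition inv_letter :: "letter \<Rightarrow> letter" where
  "inv_letter l = (fst l, \<not> snd l)"

fun reduced :: "letter list \<Rightarrow> bool" where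
  "reduced [] = True"
| "reduced [l] = True"
| "reduced (l # m # w) = (m \<noteq> inv_letter l \<and> reduced (m # w))"

definition cons_red :: "letter \<Rightarrow> letter list \<Rightarrow> letter list" where
  "cons_red l w = (case w of [] \<Rightarrow> [l] | m # w' \<Rightarrow> if m = inv_letter l then w' else l # w)"

definition word_mult :: "letter list \<Rightarrow> letter list \<Rightarrow> letter list" where
  "word_mult u v = foldr cons_red u v"

typedef f2 = "{w :: letter list. reduced w}"
  morphisms rep_f2 abs_f2
  by (rule exI[of _ "[]"]) simp

definition f2_one :: f2 ("\<e>") where
  "f2_one = abs_f2 []"

definition f2_mult :: "f2 \<Rightarrow> f2 \<Rightarrow> f2" (infixl "\<cdot>" 70) where
  "g \<cdot> h = abs_f2 (word_mult (rep_f2 g) (rep_f2 h))"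

definition gen_pow :: "gen \<Rightarrow> bool \<Rightarrow> f2" where
  "gen_pow a s = abs_f2 [(a, s)]"

(* a point x : f2 => bool; x h = True encodes x^h = 1, False encodes x^h = -1 *)
type_synonym point = "f2 \<Rightarrow> bool"

definition Xmeasure :: "point measure" where
  "Xmeasure = PiM UNIV (\<lambda>_. measure_pmf (bernoulli_pmf (1/2)))"

definition shift :: "f2 \<Rightarrow> point \<Rightarrow> point" where
  "shift g x = (\<lambda>h. x (h \<cdot> g))"

datatype pcol = PU | PC

type_synonym colour = "gen \<times> pcol"   (* (active part, pcol part) *)
type_synonym colouring = "point \<Rightarrow> colour"

definition tgt :: "gen \<Rightarrow> point \<Rightarrow> point" where
  "tgt a x = shift (gen_pow a (x \<e>)) x"

definition arrow :: "colouring \<Rightarrow> point \<Rightarrow> point" where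
  "arrow c x = tgt (fst (c x)) x"

definition colouring_rule :: "colouring \<Rightarrow> point \<Rightarrow> bool" where
  "colouring_rule c x \<longleftrightarrow>
     (\<forall>a b. {a, b} = {T1, T2} \<longrightarrow>
        snd (c (tgt a x)) = PU \<longrightarrow> snd (c (tgt b x)) = PC \<longrightarrow> arrow c x = tgt a x)
   \<and> (snd (c x) = PC \<longleftrightarrow> (\<exists>y z. y \<noteq> z \<and> arrow c y = x \<and> arrow c z = x))"

definition invariant_extension :: "point set set \<Rightarrow> (point set \<Rightarrow> real) \<Rightarrow> bool" where
  "invariant_extension B \<mu> \<longleftrightarrow>
     algebra (space Xmeasure) B
   \<and> sets (completion Xmeasure) \<subseteq> B
   \<and> (\<forall>A\<in>sets (completion Xmeasure). \<mu> A = measure (completion Xmeasure) A)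
   \<and> (\<forall>g. \<forall>A\<in>B. shift g -` A \<inter> space Xmeasure \<in> B)
   \<and> (\<forall>g. \<forall>A\<in>B. \<mu> (shift g -` A \<inter> space Xmeasure) = \<mu> A)
   \<and> (\<forall>A\<in>B. 0 \<le> \<mu> A)
   \<and> \<mu> (space Xmeasure) = 1
   \<and> (\<forall>A\<in>B. \<forall>C\<in>B. A \<inter> C = {} \<longrightarrow> \<mu> (A \<union> C) = \<mu> A + \<mu> C)"

definition satisfies :: "(colouring \<Rightarrow> point \<Rightarrow> bool) \<Rightarrow> colouring \<Rightarrow> bool" where
  "satisfies R c \<longleftrightarrow> (AE x in Xmeasure. R c x)"

definition paradoxical :: "(colouring \<Rightarrow> point \<Rightarrow> bool) \<Rightarrow> bool" where
  "paradoxical R \<longleftrightarrow>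
     (\<exists>c. satisfies R c)
   \<and> \<not> (\<exists>B \<mu> c. invariant_extension B \<mu> \<and> satisfies R c
            \<and> (\<forall>k. {x \<in> space Xmeasure. c x = k} \<in> B))"

end

(*
  Off a null set the shift action is free: if u \<noteq> v, then shift u x = shift v x forces
  x (h u) = x (h v) for all h, and choosing n elements h with Hu and Hv disjoint covers this
  event by 2^n cylinders of measure 4^-n. On a free orbit write every point as g x0 for a fixed
  representative x0 and let the arrow prepend to the reduced word g a letter that does not
  cancel; the arrow map is then injective, so colouring every point with passive colour u
  satisfies the rule.

  Let C be the set of points of passive colour c and group the arrows by their
  direction (i, x^e). Invariance of the mean gives a mass transport identity: summing over the
  four directions the mean of the points of A that receive an arrow from that direction gives
  the mean of arrow^-1 A. Points of C receive at least two arrows, other points at most one,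
  and the cylinder on which x (T_i^s) = s receives none; by rule (1) both potential targets of
  a point whose arrow lands in C lie in C. Hence 2 mu(C) <= mu(arrow^-1 C) <= 2 mu(C) and mu(C) >= 1/16. In the equality
  case almost every x in C has, for all i and s, the point y = T_i^-s x with y^e = s and both
  targets of y in C. This fixes x on the four generators, and applied to T2 T1^-1 x in C it
  fixes one more coordinate, so mu(C) <= 1/32.
*)
theory Submission
  imports Defs
begin

section \<open>The free group and its shift action\<close>

lemma UNIV_gen: "(UNIV :: gen set) = {T1, T2}"
  using gen.exhaust by auto

instance gen :: finite
  by standard (simp add: UNIV_gen)

lemma all_gen: "(\<forall>a. P a) \<longleftrightarrow> P T1 \<and> P T2"
proof (intro iffI allI)
  fix a
  assume "P T1 \<and> P T2"
  then show "P a"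
    by (cases a) simp_all
qed simp

lemma inv_letter_inv_letter [simp]: "inv_letter (inv_letter l) = l"
  by (simp add: inv_letter_def)

lemma reduced_ConsD: "reduced (l # w) \<Longrightarrow> reduced w"
  by (cases w) auto

lemma reduced_cons_red: "reduced w \<Longrightarrow> reduced (cons_red l w)"
  by (cases w) (auto simp: cons_red_def dest: reduced_ConsD)

lemma cons_red_inv_letter: "reduced w \<Longrightarrow> cons_red l (cons_red (inv_letter l) w) = w"
  by (cases w rule: reduced.cases) (auto simp: cons_red_def)

lemma word_mult_Nil [simp]: "word_mult [] v = v"
  and word_mult_Cons [simp]: "word_mult (l # u) v = cons_red l (word_mult u v)"
  by (simp_all add: word_mult_def)

lemma reduced_word_mult: "reduced v \<Longrightarrow> reduced (word_mult u v)"
  by (induct u) (auto intro: reduced_cons_red)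

lemma word_mult_cons_red:
  assumes "reduced w"
  shows "word_mult (cons_red l u) w = cons_red l (word_mult u w)"
proof (cases "\<exists>u'. u = inv_letter l # u'")
  case True
  then obtain u' where "u = inv_letter l # u'"
    by blast
  then show ?thesis
    using cons_red_inv_letter[OF reduced_word_mult[OF assms], of l u']
    by (simp add: cons_red_def)
next
  case False
  then show ?thesis
    by (cases u) (auto simp: cons_red_def)
qed

lemma word_mult_assoc:
  "reduced w \<Longrightarrow> word_mult (word_mult u v) w = word_mult u (word_mult v w)"
  by (induct u) (simp_all add: word_mult_cons_red)

lemma word_mult_Nil_right: "reduced w \<Longrightarrow> word_mult w [] = w"
  by (induct w rule: reduced.induct) (auto simp: cons_red_def)

definition inv_word :: "letter list \<Rightarrow> letter list" where
  "inv_word w = rev (map inv_letter w)"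

lemma inv_word_inv_word [simp]: "inv_word (inv_word w) = w"
  by (simp add: inv_word_def rev_map comp_def)

lemma word_mult_append: "word_mult (u @ v) w = word_mult u (word_mult v w)"
  by (simp add: word_mult_def)

lemma word_mult_inv_word: "reduced v \<Longrightarrow> word_mult (u @ inv_word u) v = v"
proof (induct u arbitrary: v)
  case (Cons l u)
  then show ?case
    by (simp add: inv_word_def word_mult_append cons_red_inv_letter reduced_cons_red)
qed (simp add: inv_word_def)

lemma reduced_rep_f2 [simp]: "reduced (rep_f2 g)"
  using rep_f2 by simp

lemma rep_f2_abs_f2_word_mult [simp]:
  "reduced v \<Longrightarrow> rep_f2 (abs_f2 (word_mult u v)) = word_mult u v"
  by (simp add: abs_f2_inverse reduced_word_mult)

definition f2_inv :: "f2 \<Rightarrow> f2" where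
  "f2_inv g = abs_f2 (word_mult (inv_word (rep_f2 g)) [])"

lemma f2_mult_assoc: "f2_mult (f2_mult g h) k = f2_mult g (f2_mult h k)"
  by (simp add: f2_mult_def word_mult_assoc)

lemma f2_mult_one_left [simp]: "f2_mult \<e> g = g"
  by (simp add: f2_mult_def f2_one_def abs_f2_inverse rep_f2_inverse)

lemma f2_mult_one_right [simp]: "f2_mult g \<e> = g"
  by (simp add: f2_mult_def f2_one_def abs_f2_inverse rep_f2_inverse word_mult_Nil_right)

lemma f2_mult_inv_left [simp]: "f2_mult (f2_inv g) g = \<e>"
proof -
  have "word_mult (word_mult (inv_word (rep_f2 g)) []) (rep_f2 g)
      = word_mult (inv_word (rep_f2 g) @ inv_word (inv_word (rep_f2 g))) []"
    by (simp add: word_mult_assoc word_mult_append word_mult_Nil_right)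
  also have "\<dots> = []"
    by (rule word_mult_inv_word) simp
  finally show ?thesis
    by (simp add: f2_mult_def f2_inv_def f2_one_def)
qed

lemma f2_mult_inv_right [simp]: "f2_mult g (f2_inv g) = \<e>"
proof -
  have "word_mult (rep_f2 g) (word_mult (inv_word (rep_f2 g)) [])
      = word_mult (rep_f2 g @ inv_word (rep_f2 g)) []"
    by (simp add: word_mult_append)
  also have "\<dots> = []"
    by (simp add: word_mult_inv_word)
  finally show ?thesis
    by (simp add: f2_mult_def f2_inv_def f2_one_def)
qed

lemma f2_mult_right_cancel: "f2_mult g k = f2_mult h k \<longleftrightarrow> g = h"
  by (metis f2_mult_assoc f2_mult_inv_right f2_mult_one_right)

lemma f2_mult_left_cancel: "f2_mult k g = f2_mult k h \<longleftrightarrow> g = h"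
  by (metis f2_mult_assoc f2_mult_inv_left f2_mult_one_left)

instance f2 :: countable
  by (rule countable_classI[of "to_nat \<circ> rep_f2"]) (simp add: rep_f2_inject)

lemma infinite_UNIV_f2: "infinite (UNIV :: f2 set)"
proof -
  have reduced_powers: "reduced (replicate n (T1, True))" for n
    by (induct n rule: induct_nat_012) (simp_all add: inv_letter_def)
  have "inj (\<lambda>n. abs_f2 (replicate n (T1, True)))"
    by (rule injI) (simp add: abs_f2_inject reduced_powers)
  from range_inj_infinite[OF this] show ?thesis
    by (rule infinite_super[rotated]) simp
qed

lemma gen_pow_eq_iff: "gen_pow a s = gen_pow b t \<longleftrightarrow> a = b \<and> s = t"
  by (simp add: gen_pow_def abs_f2_inject)

lemma rep_f2_gen_pow_mult:
  assumes "\<forall>w. rep_f2 g \<noteq> inv_letter (a, s) # w"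
  shows "rep_f2 (f2_mult (gen_pow a s) g) = (a, s) # rep_f2 g"
proof -
  have "cons_red (a, s) (rep_f2 g) = (a, s) # rep_f2 g"
    using assms by (cases "rep_f2 g") (auto simp: cons_red_def)
  moreover have "reduced ((a, s) # rep_f2 g)"
    using assms reduced_rep_f2[of g] by (cases "rep_f2 g") auto
  ultimately show ?thesis
    by (simp add: f2_mult_def gen_pow_def abs_f2_inverse)
qed

lemma gen_pow_conj_ne_gen_pow:
  "f2_mult (gen_pow T1 True) (f2_mult (gen_pow T2 True) (gen_pow T1 False)) \<noteq> gen_pow a s"
proof -
  have "rep_f2 (gen_pow T1 False) = [(T1, False)]"
    by (simp add: gen_pow_def abs_f2_inverse)
  then have "rep_f2 (f2_mult (gen_pow T2 True) (gen_pow T1 False)) = [(T2, True), (T1, False)]"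
    by (simp add: rep_f2_gen_pow_mult inv_letter_def)
  then have "rep_f2 (f2_mult (gen_pow T1 True) (f2_mult (gen_pow T2 True) (gen_pow T1 False)))
      = [(T1, True), (T2, True), (T1, False)]"
    by (simp add: rep_f2_gen_pow_mult inv_letter_def)
  moreover have "rep_f2 (gen_pow a s) = [(a, s)]"
    by (simp add: gen_pow_def abs_f2_inverse)
  ultimately show ?thesis
    by (metis list.inject list.distinct(1))
qed

lemma shift_shift: "shift g (shift h x) = shift (f2_mult g h) x"
  by (simp add: shift_def f2_mult_assoc)

lemma shift_one [simp]: "shift \<e> x = x"
  by (simp add: shift_def)

lemma shift_apply_one [simp]: "shift g x \<e> = x g"
  by (simp add: shift_def)

lemma gen_pow_mult_gen_pow_Not: "f2_mult (gen_pow a s) (gen_pow a (\<not> s)) = \<e>"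
  by (simp add: gen_pow_def f2_mult_def abs_f2_inverse cons_red_def inv_letter_def f2_one_def)

lemma shift_gen_pow_cancel [simp]:
  "shift (gen_pow a s) (shift (gen_pow a (\<not> s)) x) = x"
  "shift (gen_pow a (\<not> s)) (shift (gen_pow a s) x) = x"
  using gen_pow_mult_gen_pow_Not[of a s] gen_pow_mult_gen_pow_Not[of a "\<not> s"]
  by (simp_all add: shift_shift)

section \<open>The Bernoulli shift\<close>

lemma space_Xmeasure [simp]: "space Xmeasure = UNIV"
  by (simp add: Xmeasure_def space_PiM PiE_def extensional_def)

interpretation Xmeasure: prob_space Xmeasure
  unfolding Xmeasure_def by (rule prob_space_PiM) (simp add: prob_space_measure_pmf)

lemma coordinate_in_sets: "{x. x j = b} \<in> sets Xmeasure"
proof -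
  have "(\<lambda>x. x j) \<in> Xmeasure \<rightarrow>\<^sub>M measure_pmf (bernoulli_pmf (1/2))"
    unfolding Xmeasure_def by (rule measurable_component_singleton) simp
  from measurable_sets[OF this, of "{b}"] show ?thesis
    by (simp add: vimage_def)
qed

lemma cylinder_in_sets:
  assumes "finite J"
  shows "{x. \<forall>j\<in>J. x (f j) = \<sigma> j} \<in> sets Xmeasure"
proof -
  have "{x \<in> space Xmeasure. \<forall>j\<in>J. x (f j) = \<sigma> j} \<in> sets Xmeasure"
    using assms coordinate_in_sets by (intro sets.sets_Collect_finite_All) auto
  then show ?thesis
    by simp
qed

lemma measure_cylinder:
  assumes "finite J" and "inj_on f J"
  shows "measure Xmeasure {x. \<forall>j\<in>J. x (f j) = \<sigma> j} = (1/2) ^ card J"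
proof -
  interpret product_prob_space "\<lambda>_. measure_pmf (bernoulli_pmf (1/2))" UNIV
    by unfold_locales (simp add: prob_space_measure_pmf)
  define \<tau> where "\<tau> = \<sigma> \<circ> the_inv_into J f"
  have "{x. \<forall>j\<in>J. x (f j) = \<sigma> j} = {x \<in> space Xmeasure. \<forall>k\<in>f ` J. x k \<in> {\<tau> k}}"
    using assms(2) by (auto simp: \<tau>_def the_inv_into_f_f)
  moreover have "emeasure Xmeasure {x \<in> space Xmeasure. \<forall>k\<in>f ` J. x k \<in> {\<tau> k}}
      = (\<Prod>k\<in>f ` J. ennreal (1/2))"
    unfolding Xmeasure_def using assms(1)
    by (subst emeasure_PiM_Collect) (simp_all add: emeasure_pmf_single)
  moreover have "(\<Prod>k\<in>f ` J. ennreal (1/2)) = ennreal (1/2) ^ card J"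
    using card_image[OF assms(2)] by simp
  moreover have "ennreal (1/2) ^ card J = ennreal ((1/2) ^ card J)"
    by (rule ennreal_power) simp
  ultimately show ?thesis
    by (simp add: measure_def)
qed

lemma generator_pattern_in_sets: "{x. \<forall>a s. x (gen_pow a s) = \<sigma> a s} \<in> sets Xmeasure"
  using cylinder_in_sets[of "UNIV :: (gen \<times> bool) set" "case_prod gen_pow" "case_prod \<sigma>"] by simp

lemma measure_generator_pattern:
  "measure Xmeasure {x. \<forall>a s. x (gen_pow a s) = \<sigma> a s} = 1/16"
proof -
  have "inj (case_prod gen_pow)"
    by (auto intro: injI simp: gen_pow_eq_iff)
  moreover have "card (UNIV :: (gen \<times> bool) set) = 4"
    by (simp add: UNIV_gen UNIV_Times_UNIV[symmetric] card_cartesian_product del: UNIV_Times_UNIV)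
  ultimately show ?thesis
    using measure_cylinder[of UNIV "case_prod gen_pow" "case_prod \<sigma>"] by (simp add: power_one_over)
qed

lemma generator_pattern_and_in_sets:
  "{x. x w = b \<and> (\<forall>a s. x (gen_pow a s) = \<sigma> a s)} \<in> sets Xmeasure"
proof -
  have "{x. x w = b \<and> (\<forall>a s. x (gen_pow a s) = \<sigma> a s)}
      = {x. x w = b} \<inter> {x. \<forall>a s. x (gen_pow a s) = \<sigma> a s}"
    by blast
  then show ?thesis
    by (simp add: sets.Int coordinate_in_sets generator_pattern_in_sets)
qed

lemma measure_generator_pattern_and:
  assumes "\<And>a s. w \<noteq> gen_pow a s"
  shows "measure Xmeasure {x. x w = b \<and> (\<forall>a s. x (gen_pow a s) = \<sigma> a s)} = 1/32"
proof -
  define f :: "(gen \<times> bool) option \<Rightarrow> f2" where "f = case_option w (case_prod gen_pow)"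
  have "inj f"
    unfolding f_def inj_def using assms not_sym[OF assms]
    by (simp add: split_option_all gen_pow_eq_iff)
  moreover have "card (UNIV :: (gen \<times> bool) option set) = 5"
    by (simp add: UNIV_option_conv card_image UNIV_gen UNIV_Times_UNIV[symmetric]
        card_cartesian_product del: UNIV_Times_UNIV)
  moreover have "{x. \<forall>j\<in>UNIV. x (f j) = case_option b (case_prod \<sigma>) j}
      = {x. x w = b \<and> (\<forall>a s. x (gen_pow a s) = \<sigma> a s)}"
    by (simp add: f_def split_option_all)
  ultimately show ?thesis
    using measure_cylinder[of UNIV f "case_option b (case_prod \<sigma>)"] by (simp add: power_one_over)
qed

lemma disjoint_right_translates:
  assumes "u \<noteq> v"
  shows "\<exists>H. finite H \<and> card H = n \<and> (\<forall>h\<in>H. \<forall>h'\<in>H. f2_mult h u \<noteq> f2_mult h' v)"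
proof (induct n)
  case 0
  show ?case
    by (intro exI[of _ "{}"]) simp
next
  case (Suc n)
  then obtain H where H: "finite H" "card H = n"
    and disj: "\<forall>h\<in>H. \<forall>h'\<in>H. f2_mult h u \<noteq> f2_mult h' v"
    by blast
  have inj_right: "inj (\<lambda>h. f2_mult h w)" for w
    by (rule injI) (simp add: f2_mult_right_cancel)
  let ?bad = "H \<union> (\<lambda>h. f2_mult h u) -` ((\<lambda>h. f2_mult h v) ` H)
                \<union> (\<lambda>h. f2_mult h v) -` ((\<lambda>h. f2_mult h u) ` H)"
  have "finite ?bad"
    using H(1) by (intro finite_UnI finite_vimageI finite_imageI inj_right)
  with infinite_UNIV_f2 have "\<exists>k. k \<notin> ?bad"
    by (rule ex_new_if_finite)
  then obtain k where k: "k \<notin> ?bad" ..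
  have "f2_mult k u \<noteq> f2_mult k v"
    using assms by (simp add: f2_mult_left_cancel)
  moreover have "f2_mult k u \<noteq> f2_mult h v" "f2_mult h u \<noteq> f2_mult k v" if "h \<in> H" for h
    using k that by (auto simp: image_iff)
  ultimately have "\<forall>h\<in>insert k H. \<forall>h'\<in>insert k H. f2_mult h u \<noteq> f2_mult h' v"
    using disj by simp
  moreover have "card (insert k H) = Suc n"
    using H k by simp
  ultimately show ?case
    using H(1) by blast
qed

lemma shift_eq_in_sets: "{x. shift u x = shift v x} \<in> sets Xmeasure"
proof -
  have coordinates_eq: "{x. x a = x b} \<in> sets Xmeasure" for a b
  proof -
    have "{x. x a = x b} = {x. x a = True} \<inter> {x. x b = True} \<union> {x. x a = False} \<inter> {x. x b = False}"
      by auto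
    then show ?thesis
      by (simp only:) (intro sets.Un sets.Int coordinate_in_sets)
  qed
  have "{x. shift u x = shift v x} = (\<Inter>k\<in>UNIV. {x. x (f2_mult k u) = x (f2_mult k v)})"
    by (auto simp: shift_def fun_eq_iff)
  also have "\<dots> \<in> sets Xmeasure"
    by (rule sets.countable_INT) (simp_all add: image_subset_iff coordinates_eq)
  finally show ?thesis .
qed

lemma inj_on_right_translates:
  assumes "\<forall>h\<in>H. \<forall>h'\<in>H. f2_mult h u \<noteq> f2_mult h' v"
  shows "inj_on (\<lambda>(h, b). f2_mult h (if b then u else v)) (H \<times> UNIV)"
proof (rule inj_onI, clarify)
  fix h b h' b'
  assume hs: "h \<in> H" "h' \<in> H"
    and eq: "f2_mult h (if b then u else v) = f2_mult h' (if b' then u else v)"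
  have "b = b'"
    using assms[rule_format, OF hs] assms[rule_format, OF hs(2,1)] eq by (cases b; cases b') simp_all
  then show "h = h' \<and> b = b'"
    using eq by (simp add: f2_mult_right_cancel)
qed

lemma measure_shift_eq_le:
  assumes "finite H" and disj: "\<forall>h\<in>H. \<forall>h'\<in>H. f2_mult h u \<noteq> f2_mult h' v"
  shows "measure Xmeasure {x. shift u x = shift v x} \<le> (1/2) ^ card H"
proof -
  define f where "f = (\<lambda>(h, b). f2_mult h (if b then u else v))"
  define cyl where "cyl T = {x. \<forall>j\<in>H \<times> UNIV. x (f j) = (fst j \<in> T)}" for T
  have measure_cyl: "measure Xmeasure (cyl T) = (1/2) ^ (2 * card H)" for T
    using measure_cylinder[of "H \<times> UNIV" f "\<lambda>j. fst j \<in> T"] inj_on_right_translates[OF disj] assms(1)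
    by (simp add: cyl_def f_def card_cartesian_product mult.commute)
  have cyl_in_sets: "cyl T \<in> sets Xmeasure" for T
    unfolding cyl_def using assms(1) by (intro cylinder_in_sets) simp
  have in_cyl: "x \<in> cyl {h \<in> H. x (f2_mult h u)}" if "shift u x = shift v x" for x
  proof -
    have "x (f2_mult h u) = x (f2_mult h v)" for h
      using fun_cong[OF that, of h] by (simp add: shift_def)
    then have "x (f (h, b)) = x (f2_mult h u)" for h b
      by (cases b) (simp_all add: f_def)
    then show ?thesis
      by (auto simp: cyl_def)
  qed
  have "{x. shift u x = shift v x} \<subseteq> (\<Union>T\<in>Pow H. cyl T)"
    using in_cyl by (intro subsetI UN_I[rotated]) auto
  then have "measure Xmeasure {x. shift u x = shift v x} \<le> measure Xmeasure (\<Union>T\<in>Pow H. cyl T)"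
    using assms(1) cyl_in_sets by (intro Xmeasure.finite_measure_mono sets.finite_UN) simp_all
  also have "\<dots> \<le> (\<Sum>T\<in>Pow H. measure Xmeasure (cyl T))"
    using assms(1) cyl_in_sets by (intro Xmeasure.finite_measure_subadditive_finite) auto
  also have "\<dots> = 2 ^ card H * (1/2) ^ (2 * card H)"
    using assms(1) by (simp add: measure_cyl card_Pow)
  also have "\<dots> = (1/2) ^ card H"
    by (simp add: power_mult power_one_over power2_eq_square field_simps)
  finally show ?thesis .
qed

lemma shift_eq_null:
  assumes "u \<noteq> v"
  shows "{x. shift u x = shift v x} \<in> null_sets Xmeasure"
proof -
  have "measure Xmeasure {x. shift u x = shift v x} \<le> 0"
  proof (rule field_le_epsilon)
    fix \<epsilon> :: real
    assume "0 < \<epsilon>"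
    then obtain n where "(1/2) ^ n < \<epsilon>"
      using real_arch_pow_inv[of \<epsilon> "1/2"] by auto
    moreover obtain H where "finite H" "card H = n" "\<forall>h\<in>H. \<forall>h'\<in>H. f2_mult h u \<noteq> f2_mult h' v"
      using disjoint_right_translates[OF assms] by blast
    ultimately show "measure Xmeasure {x. shift u x = shift v x} \<le> 0 + \<epsilon>"
      using measure_shift_eq_le[of H u v] by simp
  qed
  then show ?thesis
    using shift_eq_in_sets by (simp add: Xmeasure.emeasure_eq_measure null_sets_def measure_le_0_iff)
qed

lemma AE_inj_shift: "AE x in Xmeasure. inj (\<lambda>g. shift g x)"
proof -
  have "AE x in Xmeasure. shift u x = shift v x \<longrightarrow> u = v" for u v
  proof (cases "u = v")
    case False
    then show ?thesis
      using AE_not_in[OF shift_eq_null[OF False]] by simp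
  qed simp
  then have "AE x in Xmeasure. \<forall>u v. shift u x = shift v x \<longrightarrow> u = v"
    by (simp add: AE_all_countable)
  then show ?thesis
    by (rule eventually_mono) (simp add: inj_def)
qed

section \<open>A colouring satisfying the rule\<close>

definition orbit :: "point \<Rightarrow> point set" where
  "orbit x = range (\<lambda>g. shift g x)"

definition orbit_rep :: "point \<Rightarrow> point" where
  "orbit_rep x = (SOME r. r \<in> orbit x)"

definition orbit_pos :: "point \<Rightarrow> f2" where
  "orbit_pos x = (SOME g. shift g (orbit_rep x) = x)"

lemma shift_in_orbit: "shift g x \<in> orbit x"
  by (simp add: orbit_def)

lemma orbit_eq:
  assumes "y \<in> orbit x"
  shows "orbit y = orbit x"
proof -
  obtain g where g: "y = shift g x"
    using assms by (auto simp: orbit_def)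
  have "shift h x = shift (f2_mult h (f2_inv g)) y" for h
    by (simp add: g shift_shift f2_mult_assoc)
  then show ?thesis
    using g by (auto simp: orbit_def shift_shift)
qed

lemma orbit_rep_eq: "y \<in> orbit x \<Longrightarrow> orbit_rep y = orbit_rep x"
  by (simp add: orbit_rep_def orbit_eq)

lemma orbit_rep_in_orbit: "orbit_rep x \<in> orbit x"
  unfolding orbit_rep_def by (rule someI[of _ x]) (metis shift_in_orbit shift_one)

lemma shift_orbit_pos: "shift (orbit_pos x) (orbit_rep x) = x"
proof -
  have "x \<in> orbit (orbit_rep x)"
    using orbit_eq[OF orbit_rep_in_orbit] shift_in_orbit[of \<e> x] by simp
  then obtain g where "x = shift g (orbit_rep x)"
    by (auto simp: orbit_def)
  then have "shift g (orbit_rep x) = x"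
    by simp
  then show ?thesis
    unfolding orbit_pos_def by (rule someI)
qed

lemma inj_shift_orbit:
  assumes free: "inj (\<lambda>g. shift g x)" and "y \<in> orbit x"
  shows "inj (\<lambda>g. shift g y)"
proof (rule injI)
  obtain h where h: "y = shift h x"
    using assms(2) by (auto simp: orbit_def)
  fix g g'
  assume "shift g y = shift g' y"
  then have "shift (f2_mult g h) x = shift (f2_mult g' h) x"
    by (simp add: h shift_shift)
  with free have "f2_mult g h = f2_mult g' h"
    by (rule injD)
  then show "g = g'"
    by (simp add: f2_mult_right_cancel)
qed

(* The arrow of x = g r, r the orbit representative, points to T_a^(x^e) g r; the active part a
   is chosen so that the letter (a, x^e) does not cancel the first letter of g. *)
definition outward_colouring :: colouring where
  "outward_colouring x =
     (if \<exists>w. rep_f2 (orbit_pos x) = inv_letter (T1, x \<e>) # w then T2 else T1, PU)"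

lemma arrow_outward:
  "arrow outward_colouring y
     = shift (f2_mult (gen_pow (fst (outward_colouring y)) (y \<e>)) (orbit_pos y)) (orbit_rep y)"
  by (simp add: arrow_def tgt_def shift_shift[symmetric] shift_orbit_pos)

lemma rep_f2_arrow_outward:
  "rep_f2 (f2_mult (gen_pow (fst (outward_colouring y)) (y \<e>)) (orbit_pos y))
     = (fst (outward_colouring y), y \<e>) # rep_f2 (orbit_pos y)"
  by (rule rep_f2_gen_pow_mult) (auto simp: outward_colouring_def inv_letter_def)

lemma arrow_outward_inj:
  assumes free: "inj (\<lambda>g. shift g x)"
    and y: "arrow outward_colouring y = x" and z: "arrow outward_colouring z = x"
  shows "y = z"
proof -
  have source_in_orbit: "y \<in> orbit (arrow outward_colouring y)" for y
    using shift_in_orbit[of "gen_pow (fst (outward_colouring y)) (\<not> y \<e>)" "arrow outward_colouring y"]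
    by (simp add: arrow_def tgt_def)
  have reps: "orbit_rep y = orbit_rep x" "orbit_rep z = orbit_rep x"
    using source_in_orbit[of y] source_in_orbit[of z] y z by (simp_all add: orbit_rep_eq)
  have "inj (\<lambda>g. shift g (orbit_rep x))"
    using free orbit_rep_in_orbit by (rule inj_shift_orbit)
  moreover have "shift (f2_mult (gen_pow (fst (outward_colouring y)) (y \<e>)) (orbit_pos y)) (orbit_rep x)
      = shift (f2_mult (gen_pow (fst (outward_colouring z)) (z \<e>)) (orbit_pos z)) (orbit_rep x)"
    using y z reps by (simp add: arrow_outward)
  ultimately have "f2_mult (gen_pow (fst (outward_colouring y)) (y \<e>)) (orbit_pos y)
      = f2_mult (gen_pow (fst (outward_colouring z)) (z \<e>)) (orbit_pos z)"
    by (rule injD)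
  then have "rep_f2 (orbit_pos y) = rep_f2 (orbit_pos z)"
    by (metis rep_f2_arrow_outward list.inject)
  then have "orbit_pos y = orbit_pos z"
    by (simp add: rep_f2_inject)
  then show ?thesis
    using reps shift_orbit_pos[of y] shift_orbit_pos[of z] by simp
qed

lemma colouring_rule_outward:
  assumes "inj (\<lambda>g. shift g x)"
  shows "colouring_rule outward_colouring x"
proof -
  have "\<not> (\<exists>y z. y \<noteq> z \<and> arrow outward_colouring y = x \<and> arrow outward_colouring z = x)"
    using arrow_outward_inj[OF assms] by blast
  then show ?thesis
    by (simp add: colouring_rule_def outward_colouring_def)
qed

lemma satisfies_outward: "satisfies colouring_rule outward_colouring"
  unfolding satisfies_def using AE_inj_shift by (rule eventually_mono) (rule colouring_rule_outward)

section \<open>Finitely additive probabilities\<close>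

locale finitely_additive_prob =
  fixes \<Omega> :: "'a set" and B :: "'a set set" and \<mu> :: "'a set \<Rightarrow> real"
  assumes algebra: "algebra \<Omega> B"
    and nonneg: "A \<in> B \<Longrightarrow> 0 \<le> \<mu> A"
    and additive: "additive B \<mu>"
    and total: "\<mu> \<Omega> = 1"
begin

sublocale B: algebra \<Omega> B
  by (fact algebra)

lemma measure_Un_disjoint: "A \<in> B \<Longrightarrow> E \<in> B \<Longrightarrow> A \<inter> E = {} \<Longrightarrow> \<mu> (A \<union> E) = \<mu> A + \<mu> E"
  using additive by (simp add: additiveD)

lemma measure_empty: "\<mu> {} = 0"
  using measure_Un_disjoint[of "{}" "{}"] by simp

lemma measure_Int_Diff:
  assumes "A \<in> B" "E \<in> B"
  shows "\<mu> A = \<mu> (A \<inter> E) + \<mu> (A - E)"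
  using measure_Un_disjoint[OF B.Int[OF assms] B.Diff[OF assms]] by (simp add: Int_Diff_Un Int_Diff_disjoint)

lemma measure_mono:
  assumes "A \<in> B" "E \<in> B" "A \<subseteq> E"
  shows "\<mu> A \<le> \<mu> E"
  using measure_Int_Diff[OF assms(2,1)] nonneg[OF B.Diff[OF assms(2,1)]] Int_absorb1[OF assms(3)]
  by simp

lemma measure_Diff:
  assumes "A \<in> B" "E \<in> B" "A \<subseteq> E"
  shows "\<mu> (E - A) = \<mu> E - \<mu> A"
  using measure_Int_Diff[OF assms(2,1)] Int_absorb1[OF assms(3)] by simp

lemma measure_Un_Int:
  assumes "A \<in> B" "E \<in> B"
  shows "\<mu> (A \<union> E) + \<mu> (A \<inter> E) = \<mu> A + \<mu> E"
  using measure_Un_disjoint[OF assms(1) B.Diff[OF assms(2,1)]] measure_Int_Diff[OF assms(2,1)]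
  by (simp add: Int_commute)

lemma measure_subadditive:
  assumes "A \<in> B" "E \<in> B"
  shows "\<mu> (A \<union> E) \<le> \<mu> A + \<mu> E"
  using measure_Un_Int[OF assms] nonneg[OF B.Int[OF assms]] by simp

lemma measure_compl: "A \<in> B \<Longrightarrow> \<mu> (\<Omega> - A) = 1 - \<mu> A"
  using measure_Diff[of A \<Omega>] B.sets_into_space total by simp

lemma measure_Diff_null:
  assumes "A \<in> B" "N \<in> B" "\<mu> N = 0"
  shows "\<mu> (A - N) = \<mu> A"
  using measure_Int_Diff[OF assms(1,2)] measure_mono[OF B.Int[OF assms(1,2)] assms(2)]
    nonneg[OF B.Int[OF assms(1,2)]] assms(3)
  by simp

lemma measure_le_of_subset_null:
  assumes "A \<in> B" "E \<in> B" "N \<in> B" "\<mu> N = 0" "A \<subseteq> E \<union> N"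
  shows "\<mu> A \<le> \<mu> E"
  using measure_mono[OF assms(1) B.Un[OF assms(2,3)] assms(5)] measure_subadditive[OF assms(2,3)] assms(4)
  by simp

lemma measure_UN_disjoint:
  assumes "finite I" "\<And>i. i \<in> I \<Longrightarrow> A i \<in> B" "disjoint_family_on A I"
  shows "\<mu> (\<Union>i\<in>I. A i) = (\<Sum>i\<in>I. \<mu> (A i))"
  using assms
proof (induct I rule: finite_induct)
  case (insert k I)
  then have "A k \<inter> (\<Union>i\<in>I. A i) = {}"
    by (auto simp: disjoint_family_on_def)
  with insert show ?case
    by (simp add: measure_Un_disjoint B.finite_UN disjoint_family_on_mono[OF subset_insertI])
qed (simp add: measure_empty)

lemma measure_UN_le:
  assumes "finite I" "\<And>i. i \<in> I \<Longrightarrow> A i \<in> B"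
  shows "\<mu> (\<Union>i\<in>I. A i) \<le> (\<Sum>i\<in>I. \<mu> (A i))"
  using assms
proof (induct I rule: finite_induct)
  case (insert k I)
  then show ?case
    using measure_subadditive[of "A k" "\<Union>i\<in>I. A i"] by (simp add: B.finite_UN)
qed (simp add: measure_empty)

lemma measure_UN_plus_covered_twice_le:
  assumes "finite I" "\<And>i. i \<in> I \<Longrightarrow> K i \<in> B"
  shows "\<mu> (\<Union>i\<in>I. K i) + \<mu> (\<Union>i\<in>I. \<Union>j\<in>I - {i}. K i \<inter> K j) \<le> (\<Sum>i\<in>I. \<mu> (K i))"
  using assms
proof (induct I rule: finite_induct)
  case empty
  show ?case
    by (simp add: measure_empty)
next
  case (insert k I)
  let ?U = "\<Union>i\<in>I. K i" and ?T = "\<Union>i\<in>I. \<Union>j\<in>I - {i}. K i \<inter> K j"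
  have in_B: "K k \<in> B" "?U \<in> B" "?T \<in> B"
    using insert by (auto intro!: B.finite_UN B.Int)
  have "(\<Union>i\<in>insert k I. \<Union>j\<in>insert k I - {i}. K i \<inter> K j) = ?T \<union> (K k \<inter> ?U)"
    using insert(2) by auto
  then have "\<mu> (\<Union>i\<in>insert k I. \<Union>j\<in>insert k I - {i}. K i \<inter> K j) \<le> \<mu> ?T + \<mu> (K k \<inter> ?U)"
    using measure_subadditive[OF in_B(3) B.Int[OF in_B(1,2)]] by simp
  moreover have "\<mu> (K k \<union> ?U) + \<mu> (K k \<inter> ?U) = \<mu> (K k) + \<mu> ?U"
    using in_B(1,2) by (rule measure_Un_Int)
  moreover have "\<mu> ?U + \<mu> ?T \<le> (\<Sum>i\<in>I. \<mu> (K i))"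
    using insert by simp
  ultimately show ?case
    using insert(1,2) by simp
qed

lemma measure_covered_twice_le:
  assumes "finite I" "\<And>i. i \<in> I \<Longrightarrow> K i \<in> B" "D \<in> B"
    and "D \<subseteq> (\<Union>i\<in>I. \<Union>j\<in>I - {i}. K i \<inter> K j)"
  shows "2 * \<mu> D \<le> (\<Sum>i\<in>I. \<mu> (K i))"
proof -
  have "\<mu> D \<le> \<mu> (\<Union>i\<in>I. \<Union>j\<in>I - {i}. K i \<inter> K j)" "\<mu> D \<le> \<mu> (\<Union>i\<in>I. K i)"
    using assms by (auto intro!: measure_mono B.finite_UN B.Int)
  moreover have "\<mu> (\<Union>i\<in>I. K i) + \<mu> (\<Union>i\<in>I. \<Union>j\<in>I - {i}. K i \<inter> K j) \<le> (\<Sum>i\<in>I. \<mu> (K i))"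
    using assms(1,2) by (rule measure_UN_plus_covered_twice_le)
  ultimately show ?thesis
    by linarith
qed

end

locale shift_invariant_extension =
  fixes B :: "point set set" and \<mu> :: "point set \<Rightarrow> real"
  assumes invariant_extension: "invariant_extension B \<mu>"
begin

sublocale finitely_additive_prob UNIV B \<mu>
  by (intro finitely_additive_prob.intro)
    (use invariant_extension in \<open>simp_all add: invariant_extension_def additive_def\<close>)

lemma sets_Xmeasure_in_B:
  assumes "A \<in> sets Xmeasure"
  shows "A \<in> B"
proof -
  have "sets (completion Xmeasure) \<subseteq> B"
    using invariant_extension by (simp add: invariant_extension_def)
  with assms show ?thesis
    by auto
qed

lemma measure_eq_Xmeasure:
  assumes "A \<in> sets Xmeasure"
  shows "\<mu> A = measure Xmeasure A"
proof -
  have "\<forall>A\<in>sets (completion Xmeasure). \<mu> A = measure (completion Xmeasure) A"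
    using invariant_extension by (simp add: invariant_extension_def)
  with assms show ?thesis
    by simp
qed

lemma null_set_in_B: "N \<in> null_sets Xmeasure \<Longrightarrow> N \<in> B"
  by (simp add: sets_Xmeasure_in_B null_setsD2)

lemma measure_null_set: "N \<in> null_sets Xmeasure \<Longrightarrow> \<mu> N = 0"
  by (simp add: measure_eq_Xmeasure null_setsD2 measure_eq_0_null_sets)

lemma shift_vimage_in_B: "A \<in> B \<Longrightarrow> shift g -` A \<in> B"
  using invariant_extension by (simp add: invariant_extension_def)

lemma measure_shift_vimage: "A \<in> B \<Longrightarrow> \<mu> (shift g -` A) = \<mu> A"
  using invariant_extension by (simp add: invariant_extension_def)

end

section \<open>Arrows and crowded points\<close>

definition crowded :: "colouring \<Rightarrow> point set" where
  "crowded c = {x. snd (c x) = PC}"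

definition direction :: "colouring \<Rightarrow> point \<Rightarrow> gen \<times> bool" where
  "direction c x = (fst (c x), x \<e>)"

(* receives c (a, s) is the set of points z whose neighbour T_a^-s z has direction (a, s) and
   therefore sends its arrow to z. *)
definition receives :: "colouring \<Rightarrow> gen \<times> bool \<Rightarrow> point set" where
  "receives c i = shift (gen_pow (fst i) (\<not> snd i)) -` (direction c -` {i})"

definition targets_crowded :: "colouring \<Rightarrow> bool \<Rightarrow> point set" where
  "targets_crowded c s = {y. y \<e> = s \<and> (\<forall>a. shift (gen_pow a s) y \<in> crowded c)}"

lemma arrow_eq_shift_direction:
  "arrow c y = shift (gen_pow (fst (direction c y)) (snd (direction c y))) y"
  by (simp add: arrow_def tgt_def direction_def)

lemma shift_back_arrow:
  "shift (gen_pow (fst (direction c y)) (\<not> snd (direction c y))) (arrow c y) = y"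
  by (simp add: arrow_eq_shift_direction)

lemma arrow_in_receives: "arrow c y \<in> receives c (direction c y)"
  by (simp add: receives_def shift_back_arrow)

lemma arrow_shift_back:
  assumes "z \<in> receives c i"
  shows "arrow c (shift (gen_pow (fst i) (\<not> snd i)) z) = z"
proof -
  have "direction c (shift (gen_pow (fst i) (\<not> snd i)) z) = i"
    using assms by (simp add: receives_def)
  then show ?thesis
    by (simp add: arrow_eq_shift_direction)
qed

lemma receives_apply:
  assumes "z \<in> receives c i"
  shows "z (gen_pow (fst i) (\<not> snd i)) = snd i"
proof -
  have "snd (direction c (shift (gen_pow (fst i) (\<not> snd i)) z)) = snd i"
    using assms by (simp add: receives_def)
  then show ?thesis
    by (simp add: direction_def)
qed

lemma direction_neq_if_same_arrow:
  assumes "y \<noteq> y'" and same_arrow: "arrow c y = arrow c y'"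
  shows "direction c y \<noteq> direction c y'"
proof
  assume same: "direction c y = direction c y'"
  have "y = shift (gen_pow (fst (direction c y)) (\<not> snd (direction c y))) (arrow c y)"
    by (rule shift_back_arrow[symmetric])
  also have "\<dots> = shift (gen_pow (fst (direction c y')) (\<not> snd (direction c y'))) (arrow c y')"
    by (simp only: same same_arrow)
  also have "\<dots> = y'"
    by (rule shift_back_arrow)
  finally show False
    using assms(1) by simp
qed

lemma two_arrows_iff_receives:
  "(\<exists>y y'. y \<noteq> y' \<and> arrow c y = x \<and> arrow c y' = x)
     \<longleftrightarrow> (\<exists>i j. i \<noteq> j \<and> x \<in> receives c i \<and> x \<in> receives c j)"
proof
  assume "\<exists>y y'. y \<noteq> y' \<and> arrow c y = x \<and> arrow c y' = x"
  then obtain y y' where yy': "y \<noteq> y'" "arrow c y = x" "arrow c y' = x"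
    by blast
  have "direction c y \<noteq> direction c y'"
    using yy' by (intro direction_neq_if_same_arrow) simp_all
  moreover have "x \<in> receives c (direction c y)" "x \<in> receives c (direction c y')"
    using arrow_in_receives[of c y] arrow_in_receives[of c y'] yy'(2,3) by simp_all
  ultimately show "\<exists>i j. i \<noteq> j \<and> x \<in> receives c i \<and> x \<in> receives c j"
    by blast
next
  assume "\<exists>i j. i \<noteq> j \<and> x \<in> receives c i \<and> x \<in> receives c j"
  then obtain i j where ij: "i \<noteq> j" "x \<in> receives c i" "x \<in> receives c j"
    by blast
  let ?y = "shift (gen_pow (fst i) (\<not> snd i)) x" and ?y' = "shift (gen_pow (fst j) (\<not> snd j)) x"
  have directions: "direction c ?y = i" "direction c ?y' = j"
    using ij by (simp_all add: receives_def)
  have "?y \<noteq> ?y'"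
  proof
    assume "?y = ?y'"
    then have "direction c ?y = direction c ?y'"
      by (rule arg_cong)
    then have "i = j"
      by (simp only: directions)
    with ij(1) show False ..
  qed
  moreover have "arrow c ?y = x" "arrow c ?y' = x"
    using ij by (simp_all add: arrow_shift_back)
  ultimately show "\<exists>y y'. y \<noteq> y' \<and> arrow c y = x \<and> arrow c y' = x"
    by blast
qed

lemma colouring_rule_crowded_iff:
  "colouring_rule c x \<Longrightarrow> x \<in> crowded c \<longleftrightarrow> (\<exists>i j. i \<noteq> j \<and> x \<in> receives c i \<and> x \<in> receives c j)"
  by (simp add: colouring_rule_def crowded_def two_arrows_iff_receives)

lemma colouring_rule_arrow_crowded:
  assumes rule: "colouring_rule c x" and crowded_arrow: "arrow c x \<in> crowded c"
  shows "x \<in> targets_crowded c (x \<e>)"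
proof -
  have "tgt a x \<in> crowded c" for a
  proof (cases "a = fst (c x)")
    case True
    then show ?thesis
      using crowded_arrow by (simp add: arrow_def)
  next
    case False
    show ?thesis
    proof (rule ccontr)
      assume uncrowded: "tgt a x \<notin> crowded c"
      then have "snd (c (tgt a x)) = PU"
        by (cases "snd (c (tgt a x))") (simp_all add: crowded_def)
      moreover have "{a, fst (c x)} = {T1, T2}"
        using False by (cases a; cases "fst (c x)") auto
      moreover have "snd (c (tgt (fst (c x)) x)) = PC"
        using crowded_arrow by (simp add: arrow_def crowded_def)
      moreover have "\<And>a b. {a, b} = {T1, T2} \<Longrightarrow> snd (c (tgt a x)) = PU
          \<Longrightarrow> snd (c (tgt b x)) = PC \<Longrightarrow> arrow c x = tgt a x"
        using rule by (simp add: colouring_rule_def)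
      ultimately have "arrow c x = tgt a x"
        by blast
      then show False
        using uncrowded crowded_arrow by simp
    qed
  qed
  then show ?thesis
    by (simp add: targets_crowded_def tgt_def)
qed

lemma targets_crowded_back:
  "shift (gen_pow a (\<not> s)) -` targets_crowded c s \<subseteq> crowded c \<inter> {z. z (gen_pow a (\<not> s)) = s}"
proof
  fix z
  assume "z \<in> shift (gen_pow a (\<not> s)) -` targets_crowded c s"
  then have all_crowded: "\<forall>b. shift (gen_pow b s) (shift (gen_pow a (\<not> s)) z) \<in> crowded c"
    and "z (gen_pow a (\<not> s)) = s"
    by (simp_all add: targets_crowded_def)
  moreover have "z \<in> crowded c"
    using all_crowded[rule_format, of a] by simp
  ultimately show "z \<in> crowded c \<inter> {z. z (gen_pow a (\<not> s)) = s}"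
    by simp
qed

lemma generator_pattern_if_targets_crowded:
  assumes back_targets: "\<And>a s. shift (gen_pow a (\<not> s)) z \<in> targets_crowded c s"
    and conj_targets: "shift (gen_pow T2 True) (shift (gen_pow T1 False) z) \<in> crowded c \<Longrightarrow>
      shift (gen_pow T1 True) (shift (gen_pow T2 True) (shift (gen_pow T1 False) z)) \<in> targets_crowded c False"
  shows "z (f2_mult (gen_pow T1 True) (f2_mult (gen_pow T2 True) (gen_pow T1 False))) = False
    \<and> (\<forall>a s. z (gen_pow a s) = (\<not> s))"
proof
  have coordinates: "z (gen_pow a (\<not> s)) = s" for a s
    using back_targets[of a s] by (simp add: targets_crowded_def)
  show "\<forall>a s. z (gen_pow a s) = (\<not> s)"
  proof (intro allI)
    fix a s
    show "z (gen_pow a s) = (\<not> s)"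
      using coordinates[of a "\<not> s"] by simp
  qed
  have "shift (gen_pow T2 True) (shift (gen_pow T1 False) z) \<in> crowded c"
    using back_targets[of T1 True] by (simp add: targets_crowded_def)
  then have "shift (gen_pow T1 True) (shift (gen_pow T2 True) (shift (gen_pow T1 False) z))
      \<in> targets_crowded c False"
    by (rule conj_targets)
  then show "z (f2_mult (gen_pow T1 True) (f2_mult (gen_pow T2 True) (gen_pow T1 False))) = False"
    by (simp add: targets_crowded_def shift_def f2_mult_assoc)
qed

section \<open>No solution is measurable for an invariant extension\<close>

locale invariant_solution = shift_invariant_extension +
  fixes c :: colouring and N :: "point set"
  assumes colour_class_in_B: "{x. c x = k} \<in> B"
    and null: "N \<in> null_sets Xmeasure"
    and colouring_rule_outside: "x \<notin> N \<Longrightarrow> colouring_rule c x"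
begin

lemma N_in_B: "N \<in> B"
  using null by (rule null_set_in_B)

lemma measure_N: "\<mu> N = 0"
  using null by (rule measure_null_set)

lemma direction_vimage_in_B: "direction c -` {i} \<in> B"
proof -
  have "direction c -` {i} = ({x. c x = (fst i, PU)} \<union> {x. c x = (fst i, PC)}) \<inter> {x. x \<e> = snd i}"
  proof (rule set_eqI)
    fix x
    obtain a p where "c x = (a, p)"
      by (cases "c x")
    then show "x \<in> direction c -` {i} \<longleftrightarrow>
        x \<in> ({x. c x = (fst i, PU)} \<union> {x. c x = (fst i, PC)}) \<inter> {x. x \<e> = snd i}"
      by (cases p) (auto simp: direction_def prod_eq_iff)
  qed
  then show ?thesis
    by (simp add: B.Int B.Un colour_class_in_B sets_Xmeasure_in_B coordinate_in_sets)
qed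

lemma crowded_in_B: "crowded c \<in> B"
proof -
  have "x \<in> crowded c \<longleftrightarrow> c x = (T1, PC) \<or> c x = (T2, PC)" for x
  proof -
    obtain a p where "c x = (a, p)"
      by (cases "c x")
    then show ?thesis
      by (cases a) (simp_all add: crowded_def)
  qed
  then have "crowded c = {x. c x = (T1, PC)} \<union> {x. c x = (T2, PC)}"
    by auto
  then show ?thesis
    by (simp add: B.Un colour_class_in_B)
qed

lemma receives_in_B: "receives c i \<in> B"
  unfolding receives_def by (intro shift_vimage_in_B direction_vimage_in_B)

lemma arrow_vimage_in_B:
  assumes "A \<in> B"
  shows "arrow c -` A \<in> B"
proof -
  have "arrow c -` A = (\<Union>i\<in>UNIV. direction c -` {i} \<inter> shift (gen_pow (fst i) (snd i)) -` A)"
    by (auto simp: arrow_eq_shift_direction)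
  then show ?thesis
    using assms by (simp add: B.finite_UN B.Int direction_vimage_in_B shift_vimage_in_B)
qed

lemma targets_crowded_in_B: "targets_crowded c s \<in> B"
proof -
  have "targets_crowded c s
      = {y. y \<e> = s} \<inter> shift (gen_pow T1 s) -` crowded c \<inter> shift (gen_pow T2 s) -` crowded c"
    by (auto simp: targets_crowded_def all_gen)
  then show ?thesis
    by (simp add: B.Int sets_Xmeasure_in_B coordinate_in_sets shift_vimage_in_B crowded_in_B)
qed

lemma crowded_if_two_receives:
  "x \<notin> N \<Longrightarrow> i \<noteq> j \<Longrightarrow> x \<in> receives c i \<Longrightarrow> x \<in> receives c j \<Longrightarrow> x \<in> crowded c"
  using colouring_rule_crowded_iff[OF colouring_rule_outside] by blast

lemma two_receives_if_crowded:
  "x \<notin> N \<Longrightarrow> x \<in> crowded c \<Longrightarrow> \<exists>i j. i \<noteq> j \<and> x \<in> receives c i \<and> x \<in> receives c j"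
  using colouring_rule_crowded_iff[OF colouring_rule_outside] by blast

lemma sum_measure_receives_Int:
  assumes "A \<in> B"
  shows "(\<Sum>i\<in>UNIV. \<mu> (receives c i \<inter> A)) = \<mu> (arrow c -` A)"
proof -
  define P where "P i = direction c -` {i} \<inter> arrow c -` A" for i
  have P_in_B: "P i \<in> B" for i
    unfolding P_def using assms by (intro B.Int direction_vimage_in_B arrow_vimage_in_B)
  have "receives c i \<inter> A = shift (gen_pow (fst i) (\<not> snd i)) -` P i" for i
  proof (rule set_eqI)
    fix z
    show "z \<in> receives c i \<inter> A \<longleftrightarrow> z \<in> shift (gen_pow (fst i) (\<not> snd i)) -` P i"
      using arrow_shift_back[of z c i] by (auto simp: receives_def P_def)
  qed
  then have "(\<Sum>i\<in>UNIV. \<mu> (receives c i \<inter> A)) = (\<Sum>i\<in>UNIV. \<mu> (P i))"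
    by (simp add: measure_shift_vimage P_in_B)
  also have "\<dots> = \<mu> (\<Union>i\<in>UNIV. P i)"
    using P_in_B by (intro measure_UN_disjoint[symmetric]) (auto simp: disjoint_family_on_def P_def)
  also have "(\<Union>i\<in>UNIV. P i) = arrow c -` A"
    by (auto simp: P_def)
  finally show ?thesis .
qed

lemma measure_targets_crowded_le: "\<mu> (targets_crowded c s) \<le> \<mu> (crowded c)"
proof -
  have "targets_crowded c s \<subseteq> shift (gen_pow T1 s) -` crowded c"
    by (auto simp: targets_crowded_def)
  then have "\<mu> (targets_crowded c s) \<le> \<mu> (shift (gen_pow T1 s) -` crowded c)"
    by (intro measure_mono targets_crowded_in_B shift_vimage_in_B crowded_in_B)
  then show ?thesis
    by (simp add: measure_shift_vimage crowded_in_B)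
qed

lemma measure_arrow_vimage_crowded_le:
  "\<mu> (arrow c -` crowded c) \<le> \<mu> (targets_crowded c True) + \<mu> (targets_crowded c False)"
proof -
  have "arrow c -` crowded c \<subseteq> (targets_crowded c True \<union> targets_crowded c False) \<union> N"
  proof
    fix x
    assume "x \<in> arrow c -` crowded c"
    then have "x \<notin> N \<Longrightarrow> x \<in> targets_crowded c (x \<e>)"
      by (simp add: colouring_rule_arrow_crowded colouring_rule_outside)
    then show "x \<in> (targets_crowded c True \<union> targets_crowded c False) \<union> N"
      by (cases "x \<e>") auto
  qed
  then have "\<mu> (arrow c -` crowded c) \<le> \<mu> (targets_crowded c True \<union> targets_crowded c False)"
    by (rule measure_le_of_subset_null[OF arrow_vimage_in_B[OF crowded_in_B]
          B.Un[OF targets_crowded_in_B targets_crowded_in_B] N_in_B measure_N])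
  also have "\<dots> \<le> \<mu> (targets_crowded c True) + \<mu> (targets_crowded c False)"
    by (intro measure_subadditive targets_crowded_in_B)
  finally show ?thesis .
qed

lemma crowded_covered_twice: "2 * \<mu> (crowded c) \<le> (\<Sum>i\<in>UNIV. \<mu> (receives c i \<inter> crowded c))"
proof -
  have "crowded c - N
      \<subseteq> (\<Union>i\<in>UNIV. \<Union>j\<in>UNIV - {i}. (receives c i \<inter> crowded c) \<inter> (receives c j \<inter> crowded c))"
    using two_receives_if_crowded by blast
  then have "2 * \<mu> (crowded c - N) \<le> (\<Sum>i\<in>UNIV. \<mu> (receives c i \<inter> crowded c))"
    by (intro measure_covered_twice_le) (simp_all add: B.Int B.Diff receives_in_B crowded_in_B N_in_B)
  then show ?thesis
    by (simp add: measure_Diff_null crowded_in_B N_in_B measure_N)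
qed

lemma sum_measure_receives_Diff_crowded_le:
  "(\<Sum>i\<in>UNIV. \<mu> (receives c i - crowded c)) \<le> 1 - \<mu> (crowded c) - 1/16"
proof -
  define E0 where "E0 = {z. \<forall>a s. z (gen_pow a s) = s}"
  have E0_in_B: "E0 \<in> B"
    unfolding E0_def by (intro sets_Xmeasure_in_B generator_pattern_in_sets)
  have measure_E0: "\<mu> E0 = 1/16"
    unfolding E0_def by (simp add: measure_eq_Xmeasure generator_pattern_in_sets measure_generator_pattern)
  have receives_E0: "z \<notin> E0" if "z \<in> receives c i" for z i
  proof
    assume "z \<in> E0"
    then have "z (gen_pow (fst i) (\<not> snd i)) = (\<not> snd i)"
      by (simp add: E0_def)
    with receives_apply[OF that] show False
      by simp
  qed
  define D where "D i = receives c i - crowded c - N" for i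
  have D_in_B: "D i \<in> B" for i
    unfolding D_def by (intro B.Diff receives_in_B crowded_in_B N_in_B)
  have "disjoint_family_on D UNIV"
    unfolding disjoint_family_on_def D_def using crowded_if_two_receives by blast
  have "crowded c \<inter> E0 \<subseteq> N"
    using two_receives_if_crowded receives_E0 by blast
  then have "\<mu> (crowded c \<inter> E0) \<le> \<mu> N"
    by (intro measure_mono B.Int crowded_in_B E0_in_B N_in_B)
  then have "\<mu> (crowded c \<union> E0) = \<mu> (crowded c) + 1/16"
    using measure_Un_Int[OF crowded_in_B E0_in_B] nonneg[OF B.Int[OF crowded_in_B E0_in_B]]
    by (simp add: measure_N measure_E0)
  have "(\<Sum>i\<in>UNIV. \<mu> (receives c i - crowded c)) = (\<Sum>i\<in>UNIV. \<mu> (D i))"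
    by (simp add: D_def measure_Diff_null B.Diff receives_in_B crowded_in_B N_in_B measure_N)
  also have "\<dots> = \<mu> (\<Union>i\<in>UNIV. D i)"
    using D_in_B \<open>disjoint_family_on D UNIV\<close> by (intro measure_UN_disjoint[symmetric]) auto
  also have "\<dots> \<le> \<mu> (UNIV - (crowded c \<union> E0))"
    using receives_E0 by (intro measure_mono B.finite_UN B.Diff B.Un B.top crowded_in_B E0_in_B D_in_B)
      (auto simp: D_def)
  also have "\<dots> = 1 - \<mu> (crowded c) - 1/16"
    using \<open>\<mu> (crowded c \<union> E0) = \<mu> (crowded c) + 1/16\<close> by (simp add: measure_compl B.Un crowded_in_B E0_in_B)
  finally show ?thesis .
qed

lemma measure_crowded_ge: "1/16 \<le> \<mu> (crowded c)"
proof -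
  have "1 = (\<Sum>i\<in>UNIV. \<mu> (receives c i \<inter> UNIV))"
    using sum_measure_receives_Int[OF B.top] total by simp
  also have "\<dots> = (\<Sum>i\<in>UNIV. \<mu> (receives c i \<inter> crowded c)) + (\<Sum>i\<in>UNIV. \<mu> (receives c i - crowded c))"
    by (simp add: measure_Int_Diff[OF receives_in_B crowded_in_B] sum.distrib)
  also have "(\<Sum>i\<in>UNIV. \<mu> (receives c i \<inter> crowded c)) = \<mu> (arrow c -` crowded c)"
    by (rule sum_measure_receives_Int[OF crowded_in_B])
  finally show ?thesis
    using measure_arrow_vimage_crowded_le sum_measure_receives_Diff_crowded_le
      measure_targets_crowded_le[of True] measure_targets_crowded_le[of False]
    by linarith
qed

lemma measure_targets_crowded_eq: "\<mu> (targets_crowded c s) = \<mu> (crowded c)"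
proof -
  have "\<mu> (targets_crowded c True) = \<mu> (crowded c) \<and> \<mu> (targets_crowded c False) = \<mu> (crowded c)"
    using crowded_covered_twice sum_measure_receives_Int[OF crowded_in_B] measure_arrow_vimage_crowded_le
      measure_targets_crowded_le[of True] measure_targets_crowded_le[of False]
    by linarith
  then show ?thesis
    by (cases s) simp_all
qed

lemma measure_crowded_Diff_back:
  "\<mu> (crowded c - shift (gen_pow a (\<not> s)) -` targets_crowded c s) = 0"
proof -
  have "shift (gen_pow a (\<not> s)) -` targets_crowded c s \<subseteq> crowded c"
    using targets_crowded_back by blast
  then show ?thesis
    by (simp add: measure_Diff shift_vimage_in_B targets_crowded_in_B crowded_in_B
        measure_shift_vimage measure_targets_crowded_eq)
qed

lemma measure_crowded_le: "\<mu> (crowded c) \<le> 1/32"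
proof -
  define R where "R i = shift (gen_pow (fst i) (\<not> snd i)) -` targets_crowded c (snd i)" for i
  define Null1 where "Null1 = (\<Union>i\<in>UNIV. crowded c - R i)"
  define Null2 where
    "Null2 = shift (gen_pow T1 False) -` shift (gen_pow T2 True) -` (crowded c - R (T1, False))"
  define E where "E = {x. x (f2_mult (gen_pow T1 True) (f2_mult (gen_pow T2 True) (gen_pow T1 False))) = False
    \<and> (\<forall>a s. x (gen_pow a s) = (\<not> s))}"
  have E_in_B: "E \<in> B"
    unfolding E_def by (intro sets_Xmeasure_in_B generator_pattern_and_in_sets)
  have crowded_Diff_R_in_B: "crowded c - R i \<in> B" for i
    unfolding R_def by (intro B.Diff crowded_in_B shift_vimage_in_B targets_crowded_in_B)
  have measure_crowded_Diff_R: "\<mu> (crowded c - R i) = 0" for i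
    unfolding R_def by (rule measure_crowded_Diff_back)
  have Null_in_B: "Null1 \<in> B" "Null2 \<in> B"
    unfolding Null1_def Null2_def by (intro B.finite_UN shift_vimage_in_B crowded_Diff_R_in_B; simp)+
  have "\<mu> Null1 \<le> (\<Sum>i\<in>UNIV. \<mu> (crowded c - R i))"
    unfolding Null1_def by (rule measure_UN_le) (simp_all add: crowded_Diff_R_in_B)
  moreover have "\<mu> Null2 = 0"
    unfolding Null2_def by (simp add: measure_shift_vimage shift_vimage_in_B crowded_Diff_R_in_B measure_crowded_Diff_R)
  ultimately have "\<mu> (Null1 \<union> Null2) \<le> 0"
    using measure_subadditive[OF Null_in_B] by (simp add: measure_crowded_Diff_R)
  then have measure_Null: "\<mu> (Null1 \<union> Null2) = 0"
    using nonneg[OF B.Un[OF Null_in_B]] by simp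
  have "z \<in> E" if "z \<in> crowded c" "z \<notin> Null1 \<union> Null2" for z
    unfolding E_def using that
    by (intro CollectI generator_pattern_if_targets_crowded) (auto simp: Null1_def Null2_def R_def)
  then have "crowded c \<subseteq> E \<union> (Null1 \<union> Null2)"
    by blast
  then have "\<mu> (crowded c) \<le> \<mu> E"
    using measure_Null B.Un[OF Null_in_B] crowded_in_B E_in_B
    by (intro measure_le_of_subset_null)
  also have "\<dots> = measure Xmeasure E"
    unfolding E_def by (intro measure_eq_Xmeasure generator_pattern_and_in_sets)
  also have "\<dots> = 1/32"
    unfolding E_def by (intro measure_generator_pattern_and gen_pow_conj_ne_gen_pow)
  finally show ?thesis .
qed

end

lemma no_measurable_solution:
  assumes extension: "invariant_extension B \<mu>" and satisfies: "satisfies colouring_rule c"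
    and classes: "\<forall>k. {x \<in> space Xmeasure. c x = k} \<in> B"
  shows False
proof -
  from satisfies have "AE x in Xmeasure. colouring_rule c x"
    by (simp add: satisfies_def)
  then obtain N where "\<And>x. x \<in> space Xmeasure - N \<Longrightarrow> colouring_rule c x"
    and "N \<in> null_sets Xmeasure"
    by (rule AE_E3) auto
  moreover have "{x. c x = k} \<in> B" for k
    using classes[rule_format, of k] by simp
  ultimately interpret invariant_solution B \<mu> c N
    using extension
    by (intro invariant_solution.intro shift_invariant_extension.intro invariant_solution_axioms.intro) simp_all
  show False
    using measure_crowded_ge measure_crowded_le by simp
qed

theorem proposition3:
  shows "paradoxical colouring_rule"
  unfolding paradoxical_def using satisfies_outward no_measurable_solution by blast

end
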